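(* Let $X,Y$ be $d\times d$ complex matrices with $\|X\|_\infty+\|Y\|_\infty<\log2$. Let $M:=\max\{\|X\|_\infty,\|Y\|_\infty\}$ and $\varepsilon:=\|X+Y\|_F$. Then for every $r\ge1$, $$\|\mathrm{BCH}_r(X,Y)\|_F\le C_rM^{r-1}\varepsilon,\qquad C_r:=\frac{2^{2r-1}r^r}{r!}\le(4e)^r.$$
   Context: $\|A\|_F:=\sqrt{\operatorname{Tr}(A^\dagger A)/d}$ is the normalized Frobenius norm and $\|\cdot\|_\infty$ the operator norm. $\mathrm{BCH}_r(X,Y)$ is the degree-$r$ homogeneous term of the Baker–Campbell–Hausdorff series $\log(e^Xe^Y)=\sum_{r\ge1}\mathrm{BCH}_r(X,Y)$, given by Dynkin's formula $$\mathrm{BCH}_r(X,Y)=\sum_{n=1}^r\frac{(-1)^{n-1}}{n}\sum_{\substack{r_i,s_i\ge0,\ r_i+s_i>0\\ \sum_{i=1}^n(r_i+s_i)=r}}\frac{[X^{r_1}Y^{s_1}\cdots X^{r_n}Y^{s_n}]}{r\prod_{i=1}^n r_i!\,s_i!},$$ where $[Z_1Z_2\cdots Z_r]:=[Z_1,[Z_2,\dots,[Z_{r-1},Z_r]\dots]]$ is the left-normed commutator of the word consisting of $r_1$ copies of $X$, then $s_1$ copies of $Y$, etc. (with $[Z_1]:=Z_1$). *)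

theory Defs
  imports "HOL-Analysis.Analysis"
begin

text \<open>d x d complex matrices are modelled as complex^'n^'n with d = CARD('n).\<close>

definition op_norm :: "complex^'n^'n \<Rightarrow> real" where
  "op_norm A = onorm (\<lambda>v::complex^'n. A *v v)"

text \<open>Normalized Frobenius norm: sqrt(Tr(A^* A)/d) = sqrt(sum |A_ij|^2 / d).\<close>
definition frob_norm :: "complex^'n^'n \<Rightarrow> real" where
  "frob_norm A = sqrt ((\<Sum>i\<in>UNIV. \<Sum>j\<in>UNIV. (cmod (A $ i $ j))\<^sup>2) / real CARD('n))"

definition mcomm :: "complex^'n^'n \<Rightarrow> complex^'n^'n \<Rightarrow> complex^'n^'n" where
  "mcomm A B = A ** B - B ** A"

fun nested_comm :: "(complex^'n^'n) list \<Rightarrow> complex^'n^'n" where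
  "nested_comm [] = 0"
| "nested_comm [Z] = Z"
| "nested_comm (Z # Zs) = mcomm Z (nested_comm Zs)"

definition bch_word :: "complex^'n^'n \<Rightarrow> complex^'n^'n \<Rightarrow> (nat \<times> nat) list \<Rightarrow> (complex^'n^'n) list" where
  "bch_word X Y ps = concat (map (\<lambda>(a, b). replicate a X @ replicate b Y) ps)"

definition dynkin_idx :: "nat \<Rightarrow> nat \<Rightarrow> (nat \<times> nat) list set" where
  "dynkin_idx r n = {ps. length ps = n \<and> (\<forall>(a, b)\<in>set ps. a + b > 0)
      \<and> sum_list (map (\<lambda>(a, b). a + b) ps) = r}"

text \<open>Degree-r term of the BCH series via Dynkin's formula.\<close>
definition BCH :: "nat \<Rightarrow> complex^'n^'n \<Rightarrow> complex^'n^'n \<Rightarrow> complex^'n^'n" where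
  "BCH r X Y = (\<Sum>n\<in>{1..r}. \<Sum>ps\<in>dynkin_idx r n.
      ((-1) ^ (n - 1) / real n
        / (real r * (\<Prod>(a, b)\<leftarrow>ps. fact a * fact b))) *\<^sub>R nested_comm (bch_word X Y ps))"

end

theory Submission
  imports Defs
begin

text \<open>
  Up to the factor \<open>sqrt d\<close>, the Frobenius norm is the Euclidean norm of \<open>complex^'n^'n\<close>, and it
  satisfies the mixed bounds \<open>\<parallel>AB\<parallel> \<le> \<parallel>A\<parallel>\<^sub>\<infinity> \<parallel>B\<parallel>\<close> and \<open>\<parallel>AB\<parallel> \<le> \<parallel>A\<parallel> \<parallel>B\<parallel>\<^sub>\<infinity>\<close>.
  Replacing every letter \<open>Y\<close> of a Dynkin word by \<open>-X\<close> moves each letter by \<open>\<epsilon> = \<parallel>X + Y\<parallel>\<close> and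
  produces a nested commutator of multiples of \<open>X\<close>, which vanishes as soon as \<open>r \<ge> 2\<close>.
  Telescoping through the \<open>r\<close> letters, and bounding all other factors in operator norm, gives
  \<open>\<parallel>[Z\<^sub>1 \<dots> Z\<^sub>r]\<parallel> \<le> r 2\<^sup>r\<^sup>-\<^sup>1 M\<^sup>r\<^sup>-\<^sup>1 \<epsilon>\<close>.
  The Dynkin weights are controlled by the multinomial theorem,
  \<open>\<Sum> 1 / \<Prod> r\<^sub>i! s\<^sub>i! \<le> (2n)\<^sup>r / r!\<close>, and \<open>\<Sum>\<^sub>n\<^sub>\<le>\<^sub>r (2n)\<^sup>r / n \<le> 2\<^sup>r r\<^sup>r\<close>.
\<close>

lemma power2_norm_vec: "(norm (x :: 'a::real_normed_vector^'n))\<^sup>2 = (\<Sum>i\<in>UNIV. (norm (x $ i))\<^sup>2)"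
  unfolding norm_vec_def L2_set_def by (simp add: sum_nonneg)

lemma frob_norm_eq_norm: "frob_norm (A :: complex^'n^'n) = norm A / sqrt (real CARD('n))"
proof -
  have "norm A = sqrt (\<Sum>i\<in>UNIV. \<Sum>j\<in>UNIV. (cmod (A $ i $ j))\<^sup>2)"
    by (simp add: norm_vec_def L2_set_def sum_nonneg)
  then show ?thesis
    unfolding frob_norm_def by (simp add: real_sqrt_divide)
qed

lemma norm_transpose: "norm (transpose (A :: 'a::real_normed_vector^'n^'m)) = norm A"
proof -
  have "(norm (transpose A))\<^sup>2 = (norm A)\<^sup>2"
    by (simp add: power2_norm_vec transpose_def) (rule sum.swap)
  then show ?thesis
    by simp
qed

lemma op_norm_nonneg: "0 \<le> op_norm A"
  unfolding op_norm_def by (rule onorm_pos_le) simp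

lemma norm_matrix_vector_le_op_norm: "norm (A *v v) \<le> op_norm A * norm v"
  unfolding op_norm_def by (rule onorm) simp

lemma op_norm_uminus: "op_norm (- A) = op_norm A"
proof -
  have "(\<lambda>v. (- A) *v v) = (\<lambda>v. - (A *v v))"
    by (rule ext) (simp add: matrix_vector_mult_def vec_eq_iff sum_negf)
  then show ?thesis
    unfolding op_norm_def by (simp add: onorm_neg)
qed

lemma op_norm_diff_le: "op_norm (A - B) \<le> op_norm A + op_norm B"
proof -
  have "(\<lambda>v. (A - B) *v v) = (\<lambda>v. A *v v + - (B *v v))"
    by (simp add: matrix_vector_mult_diff_rdistrib)
  moreover have "onorm (\<lambda>v. A *v v + - (B *v v)) \<le> onorm (\<lambda>v. A *v v) + onorm (\<lambda>v. - (B *v v))"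
    by (rule onorm_triangle) (auto intro: bounded_linear_minus)
  ultimately show ?thesis
    unfolding op_norm_def by (simp add: onorm_neg)
qed

lemma op_norm_matrix_mult_le: "op_norm (A ** B) \<le> op_norm A * op_norm B"
proof -
  have "(\<lambda>v. (A ** B) *v v) = (\<lambda>v. A *v v) \<circ> (\<lambda>v. B *v v)"
    by (simp add: o_def matrix_vector_mul_assoc)
  then show ?thesis
    unfolding op_norm_def by (simp add: onorm_compose)
qed

text \<open>With \<open>w = A\<^sup>T v\<close> and \<open>u\<close> the entrywise
  conjugate of \<open>w\<close>, the bilinear pairing gives \<open>\<parallel>w\<parallel>\<^sup>2 = \<Sum>\<^sub>i v\<^sub>i (A u)\<^sub>i\<close>, so Cauchy-Schwarz
  yields \<open>\<parallel>w\<parallel>\<^sup>2 \<le> \<parallel>v\<parallel> \<parallel>A\<parallel>\<^sub>\<infinity> \<parallel>w\<parallel>\<close>.\<close>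
lemma op_norm_transpose_le: "op_norm (transpose (A :: complex^'n^'n)) \<le> op_norm A"
  unfolding op_norm_def[of "transpose A"]
proof (rule onorm_le)
  fix v :: "complex^'n"
  define w where "w = transpose A *v v"
  define u where "u = (\<chi> j. cnj (w $ j))"
  have norm_u: "norm u = norm w"
    unfolding u_def by (simp add: norm_vec_def)
  have "complex_of_real ((norm w)\<^sup>2) = (\<Sum>j\<in>UNIV. cnj (w $ j) * w $ j)"
    by (simp only: power2_norm_vec of_real_sum complex_norm_square mult.commute)
  also have "\<dots> = (\<Sum>j\<in>UNIV. \<Sum>i\<in>UNIV. cnj (w $ j) * (A $ i $ j * v $ i))"
    by (simp add: w_def matrix_vector_mult_def transpose_def sum_distrib_left)
  also have "\<dots> = (\<Sum>i\<in>UNIV. v $ i * (A *v u) $ i)"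
    by (subst sum.swap) (simp add: u_def matrix_vector_mult_def sum_distrib_left mult_ac)
  finally have norm_w_complex: "complex_of_real ((norm w)\<^sup>2) = (\<Sum>i\<in>UNIV. v $ i * (A *v u) $ i)" .
  have "(norm w)\<^sup>2 = cmod (\<Sum>i\<in>UNIV. v $ i * (A *v u) $ i)"
    by (simp flip: norm_w_complex add: norm_power)
  also have "\<dots> \<le> (\<Sum>i\<in>UNIV. \<bar>norm (v $ i)\<bar> * \<bar>norm ((A *v u) $ i)\<bar>)"
    by (rule order_trans[OF norm_sum]) (simp add: norm_mult)
  also have "\<dots> \<le> norm v * norm (A *v u)"
    unfolding norm_vec_def by (rule L2_set_mult_ineq)
  also have "\<dots> \<le> norm v * (op_norm A * norm w)"
    using norm_matrix_vector_le_op_norm[of A u] norm_u by (simp add: mult_left_mono)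
  finally have "norm w * norm w \<le> (op_norm A * norm v) * norm w"
    by (simp add: power2_eq_square mult_ac)
  then have "norm w \<le> op_norm A * norm v"
    using op_norm_nonneg[of A] by (cases "norm w = 0") auto
  then show "norm (transpose A *v v) \<le> op_norm A * norm v"
    by (simp only: w_def)
qed

lemma op_norm_transpose: "op_norm (transpose (A :: complex^'n^'n)) = op_norm A"
  using op_norm_transpose_le[of A] op_norm_transpose_le[of "transpose A"] by simp

lemma norm_matrix_mult_le_op_norm_right: "norm (A ** B) \<le> norm A * op_norm B"
proof -
  have row: "(A ** B) $ i = transpose B *v (A $ i)" for i
    by (simp add: matrix_matrix_mult_def matrix_vector_mult_def transpose_def vec_eq_iff mult.commute)
  have op_norm_B: "norm (transpose B *v x) \<le> op_norm B * norm x" for x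
    using norm_matrix_vector_le_op_norm[of "transpose B" x] by (simp only: op_norm_transpose)
  have "(norm (A ** B))\<^sup>2 = (\<Sum>i\<in>UNIV. (norm (transpose B *v (A $ i)))\<^sup>2)"
    by (simp add: power2_norm_vec row)
  also have "\<dots> \<le> (\<Sum>i\<in>UNIV. (op_norm B * norm (A $ i))\<^sup>2)"
    by (intro sum_mono power_mono op_norm_B norm_ge_zero)
  also have "\<dots> = (norm A * op_norm B)\<^sup>2"
    by (simp add: power_mult_distrib power2_norm_vec sum_distrib_left mult.commute)
  finally show ?thesis
    by (rule power2_le_imp_le) (simp add: op_norm_nonneg)
qed

lemma norm_matrix_mult_le_op_norm_left: "norm (A ** B) \<le> op_norm A * norm B"
  using norm_matrix_mult_le_op_norm_right[of "transpose B" "transpose A"]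
  by (simp add: matrix_transpose_mul[symmetric] norm_transpose op_norm_transpose mult.commute)

lemma matrix_mult_diff_left: "((A :: 'a::ring_1^'n^'m) - B) ** C = A ** C - B ** C"
  by (simp add: matrix_matrix_mult_def vec_eq_iff algebra_simps sum_subtractf)

lemma matrix_mult_diff_right: "(A :: 'a::ring_1^'n^'m) ** (B - C) = A ** B - A ** C"
  by (simp add: matrix_matrix_mult_def vec_eq_iff algebra_simps sum_subtractf)

lemma mcomm_diff: "mcomm Z N - mcomm W N' = mcomm (Z - W) N + mcomm W (N - N')"
  unfolding mcomm_def matrix_mult_diff_left matrix_mult_diff_right by (simp add: algebra_simps)

lemma mcomm_scaleR_self: "mcomm (a *\<^sub>R X) (b *\<^sub>R X) = 0"
  by (simp add: mcomm_def matrix_scalar_ac scalar_matrix_assoc[symmetric] mult.commute)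

lemma norm_mcomm_le_left: "norm (mcomm A B) \<le> 2 * op_norm A * norm B"
proof -
  have "norm (mcomm A B) \<le> norm (A ** B) + norm (B ** A)"
    unfolding mcomm_def by (rule norm_triangle_ineq4)
  also have "\<dots> \<le> op_norm A * norm B + norm B * op_norm A"
    by (intro add_mono norm_matrix_mult_le_op_norm_left norm_matrix_mult_le_op_norm_right)
  finally show ?thesis
    by simp
qed

lemma norm_mcomm_le_right: "norm (mcomm A B) \<le> 2 * norm A * op_norm B"
proof -
  have "norm (mcomm A B) \<le> norm (A ** B) + norm (B ** A)"
    unfolding mcomm_def by (rule norm_triangle_ineq4)
  also have "\<dots> \<le> norm A * op_norm B + op_norm B * norm A"
    by (intro add_mono norm_matrix_mult_le_op_norm_left norm_matrix_mult_le_op_norm_right)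
  finally show ?thesis
    by (simp add: mult_ac)
qed

lemma op_norm_mcomm_le: "op_norm (mcomm A B) \<le> 2 * op_norm A * op_norm B"
proof -
  have "op_norm (mcomm A B) \<le> op_norm (A ** B) + op_norm (B ** A)"
    unfolding mcomm_def by (rule op_norm_diff_le)
  also have "\<dots> \<le> op_norm A * op_norm B + op_norm B * op_norm A"
    by (intro add_mono op_norm_matrix_mult_le)
  finally show ?thesis
    by simp
qed

lemma nested_comm_Cons: "Zs \<noteq> [] \<Longrightarrow> nested_comm (Z # Zs) = mcomm Z (nested_comm Zs)"
  by (cases Zs) auto

lemma op_norm_nested_comm_le:
  assumes "\<forall>Z\<in>set Zs. op_norm Z \<le> M" and "Zs \<noteq> []"
  shows "op_norm (nested_comm Zs) \<le> 2 ^ (length Zs - 1) * M ^ length Zs"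
  using assms
proof (induction Zs rule: nested_comm.induct)
  case (3 Z Z' Zs)
  have "op_norm Z \<le> M"
    using "3.prems" by simp
  then have "0 \<le> M"
    by (rule order_trans[OF op_norm_nonneg])
  have IH: "op_norm (nested_comm (Z' # Zs)) \<le> 2 ^ length Zs * M ^ Suc (length Zs)"
    using "3.IH" "3.prems" by simp
  have "op_norm (nested_comm (Z # Z' # Zs)) \<le> 2 * op_norm Z * op_norm (nested_comm (Z' # Zs))"
    using op_norm_mcomm_le by simp
  also have "\<dots> \<le> 2 * M * (2 ^ length Zs * M ^ Suc (length Zs))"
    using \<open>op_norm Z \<le> M\<close> \<open>0 \<le> M\<close> IH op_norm_nonneg by (intro mult_mono) auto
  finally show ?case
    by (simp add: mult_ac)
qed simp_all

lemma norm_nested_comm_diff_le: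
  assumes "list_all2 (\<lambda>Z W. norm (Z - W) \<le> e) Zs Ws"
    and "\<forall>Z\<in>set Zs. op_norm Z \<le> M" and "\<forall>W\<in>set Ws. op_norm W \<le> M" and "Zs \<noteq> []"
  shows "norm (nested_comm Zs - nested_comm Ws)
           \<le> real (length Zs) * 2 ^ (length Zs - 1) * M ^ (length Zs - 1) * e"
  using assms
proof (induction Zs arbitrary: Ws)
  case (Cons Z Zs)
  obtain W Ws' where Ws: "Ws = W # Ws'" and ZW: "norm (Z - W) \<le> e"
    and rest: "list_all2 (\<lambda>Z W. norm (Z - W) \<le> e) Zs Ws'"
    using Cons.prems(1) by (cases Ws) auto
  have op_W: "op_norm W \<le> M" and op_Zs: "\<forall>Z\<in>set Zs. op_norm Z \<le> M"
    and op_Ws': "\<forall>W\<in>set Ws'. op_norm W \<le> M"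
    using Cons.prems(2,3) Ws by auto
  have "0 \<le> e"
    using ZW norm_ge_zero[of "Z - W"] by linarith
  show ?case
  proof (cases "Zs = []")
    case True
    then show ?thesis
      using rest Ws ZW by simp
  next
    case False
    then have "Ws' \<noteq> []"
      using rest by (cases Ws') auto
    obtain j where j: "length Zs = Suc j"
      using False by (cases Zs) auto
    have IH: "norm (nested_comm Zs - nested_comm Ws') \<le> real (Suc j) * 2 ^ j * M ^ j * e"
      using Cons.IH[OF rest op_Zs op_Ws' False] j by simp
    have op_rest: "op_norm (nested_comm Zs) \<le> 2 ^ j * M ^ Suc j"
      using op_norm_nested_comm_le[OF op_Zs False] j by simp
    have "norm (nested_comm (Z # Zs) - nested_comm Ws)
          = norm (mcomm (Z - W) (nested_comm Zs) + mcomm W (nested_comm Zs - nested_comm Ws'))"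
      by (simp only: Ws nested_comm_Cons[OF False] nested_comm_Cons[OF \<open>Ws' \<noteq> []\<close>] mcomm_diff)
    also have "\<dots> \<le> 2 * norm (Z - W) * op_norm (nested_comm Zs)
                    + 2 * op_norm W * norm (nested_comm Zs - nested_comm Ws')"
      by (intro order_trans[OF norm_triangle_ineq] add_mono norm_mcomm_le_right norm_mcomm_le_left)
    also have "\<dots> \<le> 2 * e * (2 ^ j * M ^ Suc j) + 2 * M * (real (Suc j) * 2 ^ j * M ^ j * e)"
    proof (rule add_mono)
      show "2 * norm (Z - W) * op_norm (nested_comm Zs) \<le> 2 * e * (2 ^ j * M ^ Suc j)"
        using ZW op_rest op_norm_nonneg[of "nested_comm Zs"] \<open>0 \<le> e\<close> by (intro mult_mono) auto
      show "2 * op_norm W * norm (nested_comm Zs - nested_comm Ws')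
            \<le> 2 * M * (real (Suc j) * 2 ^ j * M ^ j * e)"
        using op_W IH op_norm_nonneg[of W] by (intro mult_mono) auto
    qed
    also have "\<dots> = real (length (Z # Zs)) * 2 ^ (length (Z # Zs) - 1) * M ^ (length (Z # Zs) - 1) * e"
      by (simp add: j algebra_simps)
    finally show ?thesis .
  qed
qed simp

lemma nested_comm_in_multiples:
  "set Ws \<subseteq> range (\<lambda>c. c *\<^sub>R X) \<Longrightarrow> nested_comm Ws \<in> range (\<lambda>c. c *\<^sub>R X)"
proof (induction Ws rule: nested_comm.induct)
  case 1
  show ?case
    by (rule range_eqI[of _ _ 0]) simp
qed (auto simp: mcomm_scaleR_self)

lemma nested_comm_multiples_eq_0:
  assumes "set Ws \<subseteq> range (\<lambda>c. c *\<^sub>R X)" and "2 \<le> length Ws"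
  shows "nested_comm Ws = 0"
proof -
  obtain Z Z' Zs where Ws: "Ws = Z # Z' # Zs"
    using assms(2) by (cases Ws; cases "tl Ws") auto
  then show ?thesis
    using assms(1) nested_comm_in_multiples[of "Z' # Zs" X] by (auto simp: mcomm_scaleR_self)
qed

lemma length_bch_word: "length (bch_word X Y ps) = sum_list (map (\<lambda>(a, b). a + b) ps)"
  by (induction ps) (auto simp: bch_word_def)

lemma set_bch_word: "set (bch_word X Y ps) \<subseteq> {X, Y}"
  by (auto simp: bch_word_def)

lemma list_all2_bch_word:
  assumes "R X X'" and "R Y Y'"
  shows "list_all2 R (bch_word X Y ps) (bch_word X' Y' ps)"
proof (induction ps)
  case (Cons p ps)
  have "list_all2 R (replicate n Z) (replicate n Z')" if "R Z Z'" for n Z Z'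
    using that by (induction n) auto
  then show ?case
    using Cons assms by (cases p) (simp add: bch_word_def list_all2_appendI)
qed (simp add: bch_word_def)

lemma norm_nested_comm_bch_word_le:
  assumes "length (bch_word X Y ps) = r" and "2 \<le> r"
  shows "norm (nested_comm (bch_word X Y ps))
           \<le> real r * 2 ^ (r - 1) * max (op_norm X) (op_norm Y) ^ (r - 1) * norm (X + Y)"
proof -
  let ?W = "bch_word X (- X) ps"
  have "list_all2 (\<lambda>Z W. norm (Z - W) \<le> norm (X + Y)) (bch_word X Y ps) ?W"
    by (rule list_all2_bch_word) (simp_all add: add.commute)
  moreover have "length ?W = r"
    using assms(1) by (simp add: length_bch_word)
  moreover have "{X, - X} \<subseteq> range (\<lambda>c. c *\<^sub>R X)"
    using range_eqI[of X "\<lambda>c. c *\<^sub>R X" 1] range_eqI[of "- X" "\<lambda>c. c *\<^sub>R X" "- 1"] by simp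
  then have "set ?W \<subseteq> range (\<lambda>c. c *\<^sub>R X)"
    using set_bch_word[of X "- X" ps] by blast
  then have "nested_comm ?W = 0"
    using \<open>length ?W = r\<close> assms(2) by (intro nested_comm_multiples_eq_0) auto
  moreover have "\<forall>Z\<in>set (bch_word X Y ps). op_norm Z \<le> max (op_norm X) (op_norm Y)"
    and "\<forall>W\<in>set ?W. op_norm W \<le> max (op_norm X) (op_norm Y)"
    using set_bch_word[of X Y ps] set_bch_word[of X "- X" ps] by (auto simp: op_norm_uminus)
  ultimately show ?thesis
    using norm_nested_comm_diff_le[of "norm (X + Y)" "bch_word X Y ps" ?W] assms by fastforce
qed

definition fact_prod :: "(nat \<times> nat) list \<Rightarrow> real" where
  "fact_prod ps = (\<Prod>(a, b)\<leftarrow>ps. fact a * fact b)"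

lemma fact_prod_Nil [simp]: "fact_prod [] = 1"
  by (simp add: fact_prod_def)

lemma fact_prod_Cons [simp]: "fact_prod ((a, b) # ps) = fact a * fact b * fact_prod ps"
  by (simp add: fact_prod_def)

lemma fact_prod_pos: "0 < fact_prod ps"
  by (induction ps) auto

lemma finite_dynkin_idx: "finite (dynkin_idx r n)"
proof (rule finite_subset)
  show "dynkin_idx r n \<subseteq> {ps. set ps \<subseteq> {..r} \<times> {..r} \<and> length ps = n}"
  proof
    fix ps assume ps: "ps \<in> dynkin_idx r n"
    have "a + b \<le> r" if "(a, b) \<in> set ps" for a b
    proof -
      have "a + b \<in> set (map (\<lambda>(a, b). a + b) ps)"
        using that by force
      then have "a + b \<le> sum_list (map (\<lambda>(a, b). a + b) ps)"
        by (rule member_le_sum_list) simp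
      then show ?thesis
        using ps by (simp add: dynkin_idx_def)
    qed
    then show "ps \<in> {ps. set ps \<subseteq> {..r} \<times> {..r} \<and> length ps = n}"
      using ps by (fastforce simp: dynkin_idx_def)
  qed
qed (rule finite_lists_length_eq; simp)

lemma dynkin_idx_0: "dynkin_idx r 0 = (if r = 0 then {[]} else {})"
  by (auto simp: dynkin_idx_def)

lemma dynkin_idx_Suc_subset:
  "dynkin_idx r (Suc n)
     \<subseteq> (\<lambda>(a, b, ps). (a, b) # ps) ` (SIGMA a:{..r}. SIGMA b:{..r - a}. dynkin_idx (r - a - b) n)"
proof
  fix ps assume ps: "ps \<in> dynkin_idx r (Suc n)"
  then obtain a b ps' where eq: "ps = (a, b) # ps'"
    by (cases ps) (auto simp: dynkin_idx_def)
  then have "ps' \<in> dynkin_idx (r - a - b) n" and "a \<le> r" and "b \<le> r - a"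
    using ps by (auto simp: dynkin_idx_def)
  then show "ps \<in> (\<lambda>(a, b, ps). (a, b) # ps)
                  ` (SIGMA a:{..r}. SIGMA b:{..r - a}. dynkin_idx (r - a - b) n)"
    using eq by (intro image_eqI[where x = "(a, b, ps')"]) auto
qed

lemma binomial_div_fact:
  fixes x y :: real
  shows "(\<Sum>k\<le>m. x ^ k / fact k * (y ^ (m - k) / fact (m - k))) = (x + y) ^ m / fact m"
  by (simp add: binomial_ring sum_divide_distrib binomial_fact field_simps)

text \<open>Dropping the constraint \<open>r\<^sub>i + s\<^sub>i > 0\<close>, the sum is the coefficient of \<open>t\<^sup>r\<close> in
  \<open>(e\<^sup>t e\<^sup>t)\<^sup>n = e\<^sup>2\<^sup>n\<^sup>t\<close>.\<close>
lemma sum_inverse_fact_prod_le: "(\<Sum>ps\<in>dynkin_idx r n. 1 / fact_prod ps) \<le> (2 * real n) ^ r / fact r"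
proof (induction n arbitrary: r)
  case 0
  then show ?case
    by (simp add: dynkin_idx_0)
next
  case (Suc n)
  define S where "S = (SIGMA a:{..r}. SIGMA b:{..r - a}. dynkin_idx (r - a - b) n)"
  have "finite S"
    unfolding S_def by (intro finite_SigmaI finite_atMost finite_dynkin_idx)
  have inj: "inj_on (\<lambda>(a, b, ps). (a, b) # ps) S"
    by (auto simp: inj_on_def)
  have "(\<Sum>ps\<in>dynkin_idx r (Suc n). 1 / fact_prod ps)
        \<le> (\<Sum>ps\<in>(\<lambda>(a, b, ps). (a, b) # ps) ` S. 1 / fact_prod ps)"
    using dynkin_idx_Suc_subset[of r n] \<open>finite S\<close> fact_prod_pos unfolding S_def[symmetric]
    by (intro sum_mono2) (auto intro: less_imp_le)
  also have "\<dots> = (\<Sum>(a, b, ps)\<in>S. 1 / fact_prod ((a, b) # ps))"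
    by (subst sum.reindex[OF inj]) (simp add: case_prod_unfold)
  also have "\<dots> = (\<Sum>a\<le>r. \<Sum>b\<le>r - a. \<Sum>ps\<in>dynkin_idx (r - a - b) n.
                    1 / fact_prod ((a, b) # ps))"
    unfolding S_def by (simp add: sum.Sigma[symmetric] finite_dynkin_idx)
  also have "\<dots> = (\<Sum>a\<le>r. \<Sum>b\<le>r - a.
                    1 / (fact a * fact b) * (\<Sum>ps\<in>dynkin_idx (r - a - b) n. 1 / fact_prod ps))"
    by (simp add: sum_distrib_left)
  also have "\<dots> \<le> (\<Sum>a\<le>r. \<Sum>b\<le>r - a.
                    1 / (fact a * fact b) * ((2 * real n) ^ (r - a - b) / fact (r - a - b)))"
    by (intro sum_mono mult_left_mono Suc.IH) auto
  also have "\<dots> = (\<Sum>a\<le>r. 1 ^ a / fact a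
                    * (\<Sum>b\<le>r - a. 1 ^ b / fact b * ((2 * real n) ^ (r - a - b) / fact (r - a - b))))"
    by (simp add: sum_distrib_left mult_ac)
  also have "\<dots> = (1 + (1 + 2 * real n)) ^ r / fact r"
    by (simp only: diff_diff_add[symmetric] binomial_div_fact)
  finally show ?case
    by simp
qed

lemma sum_dynkin_weights_le:
  "(\<Sum>n\<in>{1..r}. \<Sum>ps\<in>dynkin_idx r n. 1 / (real n * fact_prod ps)) \<le> 2 ^ r * real r ^ r / fact r"
proof -
  have "(\<Sum>n\<in>{1..r}. \<Sum>ps\<in>dynkin_idx r n. 1 / (real n * fact_prod ps))
        = (\<Sum>n\<in>{1..r}. 1 / real n * (\<Sum>ps\<in>dynkin_idx r n. 1 / fact_prod ps))"
    by (simp add: sum_distrib_left)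
  also have "\<dots> \<le> (\<Sum>n\<in>{1..r}. 1 / real n * ((2 * real n) ^ r / fact r))"
    by (intro sum_mono mult_left_mono sum_inverse_fact_prod_le) auto
  also have "\<dots> \<le> (\<Sum>n\<in>{1..r}. 2 ^ r * real r ^ (r - 1) / fact r)"
  proof (rule sum_mono)
    fix n assume n: "n \<in> {1..r}"
    then have "1 / real n * ((2 * real n) ^ r / fact r) = 2 ^ r * real n ^ (r - 1) / fact r"
      by (cases r) (auto simp: field_simps)
    also have "\<dots> \<le> 2 ^ r * real r ^ (r - 1) / fact r"
      using n by (intro divide_right_mono mult_left_mono power_mono) auto
    finally show "1 / real n * ((2 * real n) ^ r / fact r) \<le> 2 ^ r * real r ^ (r - 1) / fact r" .
  qed
  also have "\<dots> \<le> 2 ^ r * real r ^ r / fact r"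
    by (cases r) (auto simp: field_simps)
  finally show ?thesis .
qed

lemma power_div_fact_le_exp:
  fixes x :: real
  assumes "0 \<le> x"
  shows "x ^ n / fact n \<le> exp x"
proof -
  have "x ^ n / fact n \<le> (\<Sum>k\<le>n. x ^ k / fact k)"
    using assms by (intro member_le_sum) auto
  also have "\<dots> \<le> exp x"
    using summable_exp_generic[of x] assms
    by (auto simp: exp_def divide_inverse ac_simps intro!: sum_le_suminf)
  finally show ?thesis .
qed

lemma BCH_constant_le: "2 ^ (2 * r - 1) * real r ^ r / fact r \<le> (4 * exp 1) ^ r"
proof -
  have "(2::real) ^ (2 * r - 1) \<le> 4 ^ r"
    using power_increasing[of "2 * r - 1" "2 * r" "2::real"] by (simp add: power_mult)
  moreover have "real r ^ r / fact r \<le> exp 1 ^ r"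
    using power_div_fact_le_exp[of "real r" r] by (simp add: exp_of_nat_mult[symmetric])
  ultimately have "2 ^ (2 * r - 1) * (real r ^ r / fact r) \<le> 4 ^ r * exp 1 ^ r"
    by (intro mult_mono) auto
  then show ?thesis
    by (simp add: power_mult_distrib)
qed

lemma BCH_1: "BCH 1 X Y = X + Y"
proof -
  have "dynkin_idx 1 1 = {[(1, 0)], [(0, 1)]}"
    by (auto simp: dynkin_idx_def length_Suc_conv add_is_1)
  then show ?thesis
    by (simp add: BCH_def bch_word_def)
qed

lemma norm_BCH_le_sum:
  "norm (BCH r X Y)
     \<le> (\<Sum>n\<in>{1..r}. \<Sum>ps\<in>dynkin_idx r n.
          norm (nested_comm (bch_word X Y ps)) / (real n * real r * fact_prod ps))"
proof -
  have "norm (BCH r X Y)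
     \<le> (\<Sum>n\<in>{1..r}. \<Sum>ps\<in>dynkin_idx r n.
          norm (((-1) ^ (n - 1) / real n / (real r * fact_prod ps)) *\<^sub>R nested_comm (bch_word X Y ps)))"
    unfolding BCH_def fact_prod_def[symmetric]
    by (rule order_trans[OF norm_sum sum_mono]) (rule norm_sum)
  also have "\<dots> = (\<Sum>n\<in>{1..r}. \<Sum>ps\<in>dynkin_idx r n.
                    norm (nested_comm (bch_word X Y ps)) / (real n * real r * fact_prod ps))"
    using fact_prod_pos by (intro sum.cong refl) (simp add: abs_mult power_abs abs_of_pos mult_ac)
  finally show ?thesis .
qed

lemma norm_BCH_le:
  fixes X Y :: "complex^'n^'n"
  assumes "1 \<le> r"
  shows "norm (BCH r X Y) \<le> (2 ^ (2 * r - 1) * real r ^ r / fact r)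
           * max (op_norm X) (op_norm Y) ^ (r - 1) * norm (X + Y)"
proof (cases "r = 1")
  case True
  then show ?thesis
    unfolding True BCH_1 by simp
next
  case False
  define K where "K = 2 ^ (r - 1) * max (op_norm X) (op_norm Y) ^ (r - 1) * norm (X + Y)"
  have "0 \<le> K"
    unfolding K_def using op_norm_nonneg[of X] by simp
  have word: "norm (nested_comm (bch_word X Y ps)) \<le> real r * K" if "ps \<in> dynkin_idx r n" for n ps
    using norm_nested_comm_bch_word_le[of X Y ps r] that assms False
    by (simp add: dynkin_idx_def length_bch_word K_def mult_ac)
  have "norm (BCH r X Y)
          \<le> (\<Sum>n\<in>{1..r}. \<Sum>ps\<in>dynkin_idx r n. real r * K / (real n * real r * fact_prod ps))"
    by (intro order_trans[OF norm_BCH_le_sum] sum_mono divide_right_mono)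
       (auto simp: word less_imp_le[OF fact_prod_pos])
  also have "\<dots> = K * (\<Sum>n\<in>{1..r}. \<Sum>ps\<in>dynkin_idx r n. 1 / (real n * fact_prod ps))"
    using assms by (simp add: sum_distrib_left)
  also have "\<dots> \<le> K * (2 ^ r * real r ^ r / fact r)"
    using \<open>0 \<le> K\<close> by (intro mult_left_mono sum_dynkin_weights_le)
  also have "\<dots> = (2 ^ (2 * r - 1) * real r ^ r / fact r)
                  * max (op_norm X) (op_norm Y) ^ (r - 1) * norm (X + Y)"
    using assms by (simp add: K_def power_add[symmetric] mult_2)
  finally show ?thesis .
qed

theorem mainTheorem7:
  fixes X Y :: "complex^'n^'n" and r :: nat
  assumes "op_norm X + op_norm Y < ln 2"
    and "r \<ge> 1"
  shows "frob_norm (BCH r X Y)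
           \<le> (2 ^ (2 * r - 1) * real r ^ r / fact r)
              * (max (op_norm X) (op_norm Y)) ^ (r - 1) * frob_norm (X + Y)
       \<and> 2 ^ (2 * r - 1) * real r ^ r / fact r \<le> (4 * exp 1) ^ r"
  using divide_right_mono[OF norm_BCH_le[OF assms(2), of X Y], of "sqrt (real CARD('n))"]
    BCH_constant_le[of r]
  by (simp add: frob_norm_eq_norm)

end
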